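(* Let $a,b,c,n$ be real constants with $a\neq 0$ and $n\neq 0$, and consider on the region of coordinates $(t,r,\phi,z)$ with $r>0$, $\phi$ periodic with period $2\pi$, the Lewis metric of the Weyl class $$ds^{2}=-f\,dt^{2}+2k\,dt\,d\phi+r^{(n^{2}-1)/2}(dr^{2}+dz^{2})+l\,d\phi^{2},$$ where $$f=ar^{1-n}-\frac{c^{2}r^{n+1}}{n^{2}a},\qquad C=\frac{cr^{n+1}}{naf}+b,\qquad k=-Cf,\qquad l=\frac{r^{2}}{f}-C^{2}f .$$ For a constant $\Omega$, introduce the coordinates $\bar{\phi}=\phi-\Omega t$, with $t,r,z$ unchanged. Then: (i) if $bc\neq n$ and $\Omega=c/(n-bc)$, the metric takes the form $$ds^{2}=-\bar{f}\,(dt+\bar{C}\,d\bar{\phi})^{2}+r^{(n^{2}-1)/2}(dr^{2}+dz^{2})+\frac{r^{2}}{\bar{f}}\,d\bar{\phi}^{2},$$ with $\bar{f}=r^{1-n}/\alpha$, $\bar{C}=b\,\frac{n-bc}{n}$ (a constant) and $\alpha=\frac{(n-bc)^{2}}{a n^{2}}$; in this case $\partial_t$ is timelike everywhere when $a>0$; (ii) if $b\neq 0$ and $\Omega=-1/b$, the metric takes the same form with $\bar{f}=r^{1+n}/\alpha$, $\alpha=-ab^{2}$, and $\bar{C}=-b\,\frac{n-bc}{n}$ (a constant); in this case $\partial_t$ is timelike everywhere when $a<0$. Moreover, in both cases, setting $\lambda_{\rm m}=(1-n)/4$ in case (i) and $\lambda_{\rm m}=(1+n)/4$ in case (ii), and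 $j=\tfrac14 b(n-bc)$ in both cases, the metric equals $$ds^{2}=-\frac{r^{4\lambda_{\rm m}}}{\alpha}\Big(dt-\frac{j}{\lambda_{\rm m}-1/4}\,d\bar{\phi}\Big)^{2}+r^{4\lambda_{\rm m}(2\lambda_{\rm m}-1)}(dr^{2}+dz^{2})+\alpha\, r^{2(1-2\lambda_{\rm m})}\,d\bar{\phi}^{2}.$$
   Context: Signature $(-+++)$. The metric is the general stationary cylindrically symmetric vacuum solution (Lewis metric) with all parameters real (Weyl class). The quantity $\lambda_{\rm m}$ is (as computed in the paper) the Komar integral of $\partial_t$ per unit $z$-length in the new coordinates and $j$ the Komar integral of $\partial_\phi$ per unit $z$-length; these interpretations are not needed for the claim. *)

theory Defs
  imports Complex_Main
begin

text \<open>Lewis metric (Weyl class), components as functions of r > 0.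
  The metric is evaluated as a quadratic form on a coordinate displacement
  (dt, dr, dphi, dz) at radius r; it does not depend on t, phi, z.\<close>

definition lewis_f :: "real \<Rightarrow> real \<Rightarrow> real \<Rightarrow> real \<Rightarrow> real" where
  "lewis_f a c n r = a * r powr (1 - n) - c^2 * r powr (n + 1) / (n^2 * a)"

definition lewis_C :: "real \<Rightarrow> real \<Rightarrow> real \<Rightarrow> real \<Rightarrow> real \<Rightarrow> real" where
  "lewis_C a b c n r = c * r powr (n + 1) / (n * a * lewis_f a c n r) + b"

definition lewis_k :: "real \<Rightarrow> real \<Rightarrow> real \<Rightarrow> real \<Rightarrow> real \<Rightarrow> real" where
  "lewis_k a b c n r = - lewis_C a b c n r * lewis_f a c n r"

definition lewis_l :: "real \<Rightarrow> real \<Rightarrow> real \<Rightarrow> real \<Rightarrow> real \<Rightarrow> real" where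
  "lewis_l a b c n r = r^2 / lewis_f a c n r - (lewis_C a b c n r)^2 * lewis_f a c n r"

definition lewis_metric ::
  "real \<Rightarrow> real \<Rightarrow> real \<Rightarrow> real \<Rightarrow> real \<Rightarrow> real \<Rightarrow> real \<Rightarrow> real \<Rightarrow> real \<Rightarrow> real" where
  "lewis_metric a b c n r dt dr dphi dz =
     - lewis_f a c n r * dt^2 + 2 * lewis_k a b c n r * dt * dphi
     + r powr ((n^2 - 1) / 2) * (dr^2 + dz^2) + lewis_l a b c n r * dphi^2"

definition bar_metric ::
  "real \<Rightarrow> real \<Rightarrow> real \<Rightarrow> real \<Rightarrow> real \<Rightarrow> real \<Rightarrow> real \<Rightarrow> real \<Rightarrow> real" where
  "bar_metric n fb Cb r dt dr dphib dz =
     - fb * (dt + Cb * dphib)^2 + r powr ((n^2 - 1) / 2) * (dr^2 + dz^2)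
     + r^2 / fb * dphib^2"

definition lam_metric ::
  "real \<Rightarrow> real \<Rightarrow> real \<Rightarrow> real \<Rightarrow> real \<Rightarrow> real \<Rightarrow> real \<Rightarrow> real \<Rightarrow> real" where
  "lam_metric lam j \<alpha> r dt dr dphib dz =
     - (r powr (4 * lam) / \<alpha>) * (dt - j / (lam - 1/4) * dphib)^2
     + r powr (4 * lam * (2 * lam - 1)) * (dr^2 + dz^2)
     + \<alpha> * r powr (2 * (1 - 2 * lam)) * dphib^2"

end

theory Submission
  imports Defs
begin

text \<open>With x = r^(1-n) and y = r^(1+n), so that xy = r^2, the (t,phi)-block of the
  Lewis metric diagonalises as
    -a x (dt + b dphi)^2 + (y/a) ((n - bc) dphi - c dt)^2 / n^2.
  Each of the two rotation rates Omega makes one of these linear forms a multiple of dphib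
  and the other a multiple of dt + Cb dphib, which gives the claimed form; in it the
  vector field d/dt has squared norm -fb, which is negative exactly when alpha > 0.\<close>

lemma power2_divide_powr_divide:
  fixes r :: real
  assumes "r > 0"
  shows "r^2 / (r powr p / \<alpha>) = \<alpha> * r powr (2 - p)"
proof -
  have "r^2 = r powr 2" using assms by simp
  then show ?thesis using assms by (simp add: powr_diff)
qed

lemma lewis_metric_diagonal:
  fixes a b c n r :: real
  assumes r: "r > 0" and a: "a \<noteq> 0" and n: "n \<noteq> 0" and f: "lewis_f a c n r \<noteq> 0"
  shows "lewis_metric a b c n r dt dr dphi dz =
     - a * r powr (1 - n) * (dt + b * dphi)^2
     + r powr (1 + n) / a * (((n - b * c) * dphi - c * dt) / n)^2
     + r powr ((n^2 - 1) / 2) * (dr^2 + dz^2)"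
proof -
  define x where "x = r powr (1 - n)"
  define y where "y = r powr (1 + n)"
  define F where "F = lewis_f a c n r"
  have F0: "F \<noteq> 0" using f unfolding F_def .
  have F_eq: "F = a * x - c^2 * y / (n^2 * a)"
    unfolding F_def lewis_f_def x_def y_def by (simp add: add.commute)
  have r2: "r^2 = x * y"
    unfolding x_def y_def using r by (simp add: powr_add [symmetric])
  have C: "lewis_C a b c n r = c * y / (n * a * F) + b"
    unfolding lewis_C_def F_def y_def by (simp add: add.commute)
  have k: "lewis_k a b c n r = - (c * y / (n * a) + b * F)"
    unfolding lewis_k_def C F_def [symmetric] using F0 by (simp add: field_simps)
  have l: "lewis_l a b c n r = y / a - 2 * b * c * y / (n * a) - b^2 * F"
  proof -
    have "lewis_l a b c n r = (x * y - (c * y / (n * a))^2) / F - 2 * b * c * y / (n * a) - b^2 * F"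
      unfolding lewis_l_def C F_def [symmetric] r2 using F0 a n
      by (simp add: field_simps power2_eq_square)
    also have "x * y - (c * y / (n * a))^2 = y * F / a"
      using a n unfolding F_eq by (simp add: field_simps power2_eq_square)
    finally show ?thesis
      using F0 by simp
  qed
  show ?thesis
    unfolding lewis_metric_def k l F_def [symmetric] F_eq x_def [symmetric] y_def [symmetric]
    using a n by (simp add: field_simps power2_eq_square)
qed

lemma lewis_metric_frame_first:
  fixes a b c n r :: real
  assumes r: "r > 0" and a: "a \<noteq> 0" and n: "n \<noteq> 0" and f: "lewis_f a c n r \<noteq> 0"
    and bc: "b * c \<noteq> n" and \<Omega>: "\<Omega> = c / (n - b * c)"
  shows "lewis_metric a b c n r dt dr (dphib + \<Omega> * dt) dz =
    bar_metric n (r powr (1 - n) / ((n - b * c)^2 / (a * n^2))) (b * (n - b * c) / n)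
      r dt dr dphib dz"
proof -
  define m where "m = n - b * c"
  define \<alpha> where "\<alpha> = m^2 / (a * n^2)"
  have "m \<noteq> 0" using bc unfolding m_def by simp
  have u: "dt + b * (dphib + c / m * dt) = n / m * (dt + b * m / n * dphib)"
    using \<open>m \<noteq> 0\<close> n unfolding m_def by (simp add: field_simps)
  have v: "(m * (dphib + c / m * dt) - c * dt) / n = m / n * dphib"
    using \<open>m \<noteq> 0\<close> by (simp add: field_simps)
  have coeffs: "a * (n / m)^2 = 1 / \<alpha>" "1 / a * (m / n)^2 = \<alpha>"
    unfolding \<alpha>_def by (simp_all add: power_divide)
  have "lewis_metric a b c n r dt dr (dphib + c / m * dt) dz
      = - (a * (n / m)^2) * r powr (1 - n) * (dt + b * m / n * dphib)^2
        + (1 / a * (m / n)^2) * r powr (1 + n) * dphib^2 + r powr ((n^2 - 1) / 2) * (dr^2 + dz^2)"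
    unfolding lewis_metric_diagonal [OF r a n f] m_def [symmetric] u v
    by (simp only: power_mult_distrib) (simp add: algebra_simps)
  also have "\<dots> = bar_metric n (r powr (1 - n) / \<alpha>) (b * m / n) r dt dr dphib dz"
    unfolding coeffs bar_metric_def power2_divide_powr_divide [OF r] by simp
  finally show ?thesis
    unfolding \<Omega> m_def \<alpha>_def by simp
qed

lemma lewis_metric_frame_second:
  fixes a b c n r :: real
  assumes r: "r > 0" and a: "a \<noteq> 0" and n: "n \<noteq> 0" and f: "lewis_f a c n r \<noteq> 0"
    and b: "b \<noteq> 0" and \<Omega>: "\<Omega> = - 1 / b"
  shows "lewis_metric a b c n r dt dr (dphib + \<Omega> * dt) dz =
    bar_metric n (r powr (1 + n) / (- a * b^2)) (- b * (n - b * c) / n) r dt dr dphib dz"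
proof -
  define Cb where "Cb = - b * (n - b * c) / n"
  define \<alpha> where "\<alpha> = - a * b^2"
  have u: "dt + b * (dphib + - 1 / b * dt) = b * dphib"
    using b by (simp add: field_simps)
  have v: "((n - b * c) * (dphib + - 1 / b * dt) - c * dt) / n = - 1 / b * (dt + Cb * dphib)"
    unfolding Cb_def using b n by (simp add: field_simps)
  have coeffs: "a * b^2 = - \<alpha>" "1 / a * (- 1 / b)^2 = - 1 / \<alpha>"
    unfolding \<alpha>_def by (simp_all add: power_divide)
  have "lewis_metric a b c n r dt dr (dphib + \<Omega> * dt) dz
      = - (a * b^2) * r powr (1 - n) * dphib^2
        + (1 / a * (- 1 / b)^2) * r powr (1 + n) * (dt + Cb * dphib)^2
        + r powr ((n^2 - 1) / 2) * (dr^2 + dz^2)"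
    unfolding \<Omega> lewis_metric_diagonal [OF r a n f] u v
    by (simp only: power_mult_distrib) (simp add: algebra_simps)
  also have "\<dots> = bar_metric n (r powr (1 + n) / \<alpha>) Cb r dt dr dphib dz"
    unfolding coeffs bar_metric_def power2_divide_powr_divide [OF r] by simp
  finally show ?thesis
    unfolding Cb_def \<alpha>_def .
qed

lemma bar_metric_eq_lam_metric:
  fixes r :: real
  assumes r: "r > 0" and p: "p = 4 * lam" and Cb: "Cb = - j / (lam - 1/4)"
    and exponent: "4 * lam * (2 * lam - 1) = (n^2 - 1) / 2"
  shows "bar_metric n (r powr p / \<alpha>) Cb r dt dr dphib dz = lam_metric lam j \<alpha> r dt dr dphib dz"
proof -
  have "2 - 4 * lam = 2 * (1 - 2 * lam)" by simp
  then show ?thesis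
    unfolding bar_metric_def lam_metric_def power2_divide_powr_divide [OF r] p Cb exponent by simp
qed

lemma lewis_metric_time_direction:
  assumes "\<And>dt dphib. lewis_metric a b c n r dt 0 (dphib + \<Omega> * dt) 0
    = bar_metric n fb Cb r dt 0 dphib 0"
  shows "lewis_metric a b c n r 1 0 \<Omega> 0 = - fb"
  using assms [of 1 0] by (simp add: bar_metric_def)

lemma lewis_metric_timelike_first:
  fixes a b c n r :: real
  assumes r: "r > 0" and a: "a > 0" and n: "n \<noteq> 0" and f: "lewis_f a c n r \<noteq> 0"
    and bc: "b * c \<noteq> n" and \<Omega>: "\<Omega> = c / (n - b * c)"
  shows "lewis_metric a b c n r 1 0 \<Omega> 0 < 0"
proof -
  from a have a0: "a \<noteq> 0" by simp
  have "lewis_metric a b c n r 1 0 \<Omega> 0 = - (r powr (1 - n) / ((n - b * c)^2 / (a * n^2)))"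
    using lewis_metric_frame_first [OF r a0 n f bc \<Omega>] by (rule lewis_metric_time_direction)
  also have "\<dots> < 0"
    using r a n bc by simp
  finally show ?thesis .
qed

lemma lewis_metric_timelike_second:
  fixes a b c n r :: real
  assumes r: "r > 0" and a: "a < 0" and n: "n \<noteq> 0" and f: "lewis_f a c n r \<noteq> 0"
    and b: "b \<noteq> 0" and \<Omega>: "\<Omega> = - 1 / b"
  shows "lewis_metric a b c n r 1 0 \<Omega> 0 < 0"
proof -
  from a have a0: "a \<noteq> 0" by simp
  have "lewis_metric a b c n r 1 0 \<Omega> 0 = - (r powr (1 + n) / (- a * b^2))"
    using lewis_metric_frame_second [OF r a0 n f b \<Omega>] by (rule lewis_metric_time_direction)
  also have "\<dots> < 0"
    using r a b by (simp add: divide_pos_neg mult_neg_pos)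
  finally show ?thesis .
qed

theorem mainTheorem1:
  fixes a b c n \<Omega> :: real
  assumes "a \<noteq> 0" and "n \<noteq> 0"
  shows
   "(b * c \<noteq> n \<and> \<Omega> = c / (n - b * c) \<longrightarrow>
      (\<forall>r dt dr dphib dz. r > 0 \<and> lewis_f a c n r \<noteq> 0 \<longrightarrow>
         lewis_metric a b c n r dt dr (dphib + \<Omega> * dt) dz
         = bar_metric n (r powr (1 - n) / ((n - b*c)^2 / (a * n^2))) (b * (n - b*c) / n)
             r dt dr dphib dz)
    \<and> (\<forall>r dt dr dphib dz. r > 0 \<longrightarrow>
         bar_metric n (r powr (1 - n) / ((n - b*c)^2 / (a * n^2))) (b * (n - b*c) / n)
             r dt dr dphib dz
         = lam_metric ((1 - n) / 4) (b * (n - b*c) / 4) ((n - b*c)^2 / (a * n^2))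
             r dt dr dphib dz)
    \<and> (a > 0 \<longrightarrow> (\<forall>r. r > 0 \<and> lewis_f a c n r \<noteq> 0 \<longrightarrow>
         lewis_metric a b c n r 1 0 \<Omega> 0 < 0)))
  \<and> (b \<noteq> 0 \<and> \<Omega> = - 1 / b \<longrightarrow>
      (\<forall>r dt dr dphib dz. r > 0 \<and> lewis_f a c n r \<noteq> 0 \<longrightarrow>
         lewis_metric a b c n r dt dr (dphib + \<Omega> * dt) dz
         = bar_metric n (r powr (1 + n) / (- a * b^2)) (- b * (n - b*c) / n)
             r dt dr dphib dz)
    \<and> (\<forall>r dt dr dphib dz. r > 0 \<longrightarrow>
         bar_metric n (r powr (1 + n) / (- a * b^2)) (- b * (n - b*c) / n)
             r dt dr dphib dz
         = lam_metric ((1 + n) / 4) (b * (n - b*c) / 4) (- a * b^2)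
             r dt dr dphib dz)
    \<and> (a < 0 \<longrightarrow> (\<forall>r. r > 0 \<and> lewis_f a c n r \<noteq> 0 \<longrightarrow>
         lewis_metric a b c n r 1 0 \<Omega> 0 < 0)))"
proof -
  have lam_first: "bar_metric n (r powr (1 - n) / \<alpha>) (b * (n - b * c) / n) r dt dr dphib dz
      = lam_metric ((1 - n) / 4) (b * (n - b * c) / 4) \<alpha> r dt dr dphib dz"
    if "r > 0" for r \<alpha> dt dr dphib dz
    using that assms(2)
    by (intro bar_metric_eq_lam_metric) (simp_all add: field_simps power2_eq_square)
  have lam_second: "bar_metric n (r powr (1 + n) / \<alpha>) (- b * (n - b * c) / n) r dt dr dphib dz
      = lam_metric ((1 + n) / 4) (b * (n - b * c) / 4) \<alpha> r dt dr dphib dz"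
    if "r > 0" for r \<alpha> dt dr dphib dz
    using that assms(2)
    by (intro bar_metric_eq_lam_metric) (simp_all add: field_simps power2_eq_square)
  show ?thesis
    using assms lam_first lam_second
    by (blast intro: lewis_metric_frame_first lewis_metric_frame_second
        lewis_metric_timelike_first lewis_metric_timelike_second)
qed

end
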